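(* Let $n$ be even, $e_1,\dots,e_n$ the standard basis of $\mathbb{R}^n$ and $e_0=e_1+\dots+e_n$. Consider the complete flags $F_0=F(e_0,e_1,\dots,e_{n-1})$, $F_1=F(e_1,e_2,\dots,e_n)$ and $F_i=F(e_i,e_{i+1},\dots,e_n,e_0,\dots,e_{i-1})$ for $2\le i\le n$. If $b:(\mathcal{F}(\mathbb{R}^n))^n\to\mathbb{R}$ is any map satisfying $b(gF'_1,\dots,gF'_n)=\operatorname{sign}(\det g)\,b(F'_1,\dots,F'_n)$ for all $g\in\mathrm{GL}_n(\mathbb{Z})$ and all flags, then $db(F_0,\dots,F_n)=0$.
   Context: $\mathcal{F}(\mathbb{R}^n)$ is the set of complete flags in $\mathbb{R}^n$. For a basis $(w_1,\dots,w_n)$, $F(w_1,\dots,w_n)$ denotes the flag $\{0\}\subset\langle w_1\rangle\subset\langle w_1,w_2\rangle\subset\dots\subset\langle w_1,\dots,w_n\rangle=\mathbb{R}^n$. The coboundary is $db(F_0,\dots,F_n)=\sum_{i=0}^n(-1)^ib(F_0,\dots,\widehat{F_i},\dots,F_n)$. *)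

theory Defs
  imports "HOL-Analysis.Analysis"
begin

text \<open>Vectors of R^n are modelled as real^'n with n = CARD('n); the standard basis
  e_1,...,e_n is given by a labelling idx : {1..n} -> 'n (a bijection).
  A complete flag V_0 < V_1 < ... < V_n is represented by the function k |-> V_k,
  extended canonically by V_k = R^n for k >= n.\<close>

definition complete_flags :: "(nat \<Rightarrow> (real^'n) set) set" where
  "complete_flags = {V. (\<forall>k. subspace (V k)) \<and> (\<forall>k. dim (V k) = min k CARD('n)) \<and>
                        (\<forall>k. V k \<subseteq> V (Suc k))}"

definition flag_of :: "(nat \<Rightarrow> real^'n) \<Rightarrow> nat \<Rightarrow> (real^'n) set" where
  "flag_of w k = span (w ` {1..min k CARD('n)})"

definition integral_matrix :: "real^'n^'n \<Rightarrow> bool" where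
  "integral_matrix g \<longleftrightarrow> (\<forall>i j. g $ i $ j \<in> \<int>)"

definition GL_Z :: "(real^'n^'n) set" where
  "GL_Z = {g. integral_matrix g \<and> (\<exists>h. integral_matrix h \<and> g ** h = mat 1 \<and> h ** g = mat 1)}"

definition flag_act :: "real^'n^'n \<Rightarrow> (nat \<Rightarrow> (real^'n) set) \<Rightarrow> nat \<Rightarrow> (real^'n) set" where
  "flag_act g V k = (\<lambda>x. g *v x) ` V k"

definition coboundary :: "('f list \<Rightarrow> real) \<Rightarrow> 'f list \<Rightarrow> real" where
  "coboundary b Fs = (\<Sum>i<length Fs. (-1) ^ i * b (take i Fs @ drop (Suc i) Fs))"

definition std_e :: "(nat \<Rightarrow> 'n) \<Rightarrow> nat \<Rightarrow> real^'n" where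
  "std_e idx i = (if i = 0 then (\<Sum>j\<in>{1..CARD('n)}. axis (idx j) 1) else axis (idx i) 1)"

text \<open>F_i = F(e_i, e_{i+1}, ..., e_n, e_0, ..., e_{i-1}) (indices cyclic mod n+1);
  for i = 0 this is F(e_0,...,e_{n-1}), for i = 1 it is F(e_1,...,e_n).\<close>
definition special_flag :: "(nat \<Rightarrow> 'n) \<Rightarrow> nat \<Rightarrow> nat \<Rightarrow> (real^'n) set" where
  "special_flag idx i = flag_of (\<lambda>j. std_e idx ((i + j - 1) mod (CARD('n) + 1)))"

end

theory Submission imports Defs "HOL-Number_Theory.Cong" begin

(* Write F_0,...,F_n for the n+1 special flags and e_0,...,e_n for the
   vectors (indices read cyclically mod n+1), so F_j is the flag of the cyclic sequence
   e_j, e_{j+1}, ..., e_{j-1} with its last vector e_{j-1} omitted.  Fix i and let p be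
   the cyclic predecessor of i.  There is an integral reflection
   g x = x - 2 (u . x) e_p with u . e_p = 1 and u . e_m = 0 for m not in {p,i}; it has
   det g = -1, so g lies in GL_n(Z).  Every F_j with j ~= i is fixed by g: g fixes
   e_m for m not in {p,i}, negates e_p, and changes e_i only by a multiple of e_p,
   which precedes e_i in the cyclic sequence of F_j.  Equivariance then gives
   b(F_0,..,omit F_i,..,F_n) = - b(F_0,..,omit F_i,..,F_n), so every term of the
   coboundary vanishes (only n >= 2 is used, which follows from n being even). *)

text \<open>If all rows except row r are those of the identity matrix, only the identity
  permutation contributes to the determinant.\<close>
lemma det_identity_except_row:
  fixes A :: "'a::comm_ring_1^'n^'n"
  assumes rows: "\<And>i j. i \<noteq> r \<Longrightarrow> A$i$j = (if i = j then 1 else 0)"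
  shows "det A = A$r$r"
proof -
  let ?term = "\<lambda>p. of_int (sign p) * (\<Prod>i\<in>UNIV. A$i$p i)"
  have vanish: "?term p = 0" if p: "p permutes UNIV" "p \<noteq> id" for p
  proof -
    obtain i where i: "p i \<noteq> i" using p(2) by fastforce
    have "p (p i) \<noteq> p i" using i permutes_inj[OF p(1)] by (metis injD)
    then obtain k where "k \<noteq> r" "p k \<noteq> k" using i by metis
    then have "A$k$p k = 0" using rows by simp
    then have "(\<Prod>i\<in>UNIV. A$i$p i) = 0" by (intro prod_zero) auto
    then show ?thesis by simp
  qed
  have "det A = (\<Sum>p\<in>{id}. ?term p)"
    unfolding det_def
    by (rule sum.mono_neutral_right) (use vanish in \<open>auto simp: permutes_id finite_permutations\<close>)
  also have "\<dots> = (\<Prod>i\<in>UNIV. A$i$i)"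
    by (simp add: sign_id)
  also have "\<dots> = A$r$r * (\<Prod>i\<in>UNIV - {r}. A$i$i)"
    by (simp add: prod.remove)
  also have "(\<Prod>i\<in>UNIV - {r}. A$i$i) = 1"
    using rows by (intro prod.neutral) auto
  finally show ?thesis by simp
qed

section \<open>Reflections x \<mapsto> x - 2 (u \<bullet> x) v\<close>

definition reflection_mat :: "real^'n \<Rightarrow> real^'n \<Rightarrow> real^'n^'n" where
  "reflection_mat u v = (\<chi> a b. (if a = b then 1 else 0) - 2 * v$a * u$b)"

lemma reflection_mat_apply: "reflection_mat u v *v x = x - (2 * (u \<bullet> x)) *\<^sub>R v"
proof -
  have "(reflection_mat u v *v x) $ a = x $ a - 2 * (u \<bullet> x) * v $ a" for a
  proof -
    have "(reflection_mat u v *v x) $ a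
          = (\<Sum>b\<in>UNIV. (if a = b then 1 else 0) * x$b - (2 * v$a) * (u$b * x$b))"
      by (simp add: reflection_mat_def matrix_vector_mult_def left_diff_distrib mult.assoc)
    also have "\<dots> = x $ a - 2 * v$a * (u \<bullet> x)"
      by (simp add: sum_subtractf sum_distrib_left[symmetric] inner_vec_def
                    if_distrib[of "\<lambda>c. c * _"] cong: if_cong)
    finally show ?thesis by simp
  qed
  then show ?thesis by (simp add: vec_eq_iff)
qed

text \<open>When u \<bullet> v = 1 the map negates v and fixes the hyperplane u \<bullet> x = 0,
  hence it is an involution.\<close>
lemma reflection_mat_involution:
  assumes "u \<bullet> v = 1"
  shows "reflection_mat u v ** reflection_mat u v = mat 1"
  unfolding matrix_eq
proof
  fix x
  have "u \<bullet> (reflection_mat u v *v x) = - (u \<bullet> x)"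
    by (simp add: reflection_mat_apply inner_diff_right assms)
  then show "(reflection_mat u v ** reflection_mat u v) *v x = mat 1 *v x"
    by (simp add: matrix_vector_mul_assoc[symmetric] reflection_mat_apply)
qed

text \<open>Being its own inverse, an integral reflection lies in GL_n(Z).\<close>
lemma reflection_mat_GL_Z:
  assumes "u \<bullet> v = 1" "\<And>a. u$a \<in> \<int>" "\<And>a. v$a \<in> \<int>"
  shows "reflection_mat u v \<in> GL_Z"
proof -
  have "integral_matrix (reflection_mat u v)"
    using assms(2,3) by (simp add: integral_matrix_def reflection_mat_def)
  then show ?thesis
    using reflection_mat_involution[OF assms(1)] unfolding GL_Z_def by blast
qed

text \<open>If u or v is a coordinate vector, the matrix agrees with the identity outside one
  row (resp. column), which gives its determinant.\<close>
lemma reflection_mat_det: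
  assumes "u = axis r 1 \<or> v = axis r 1"
  shows "det (reflection_mat u v) = 1 - 2 * (u \<bullet> v)"
  using assms
proof
  assume u: "u = axis r 1"
  have "det (reflection_mat u v) = det (transpose (reflection_mat u v))" by simp
  also have "\<dots> = transpose (reflection_mat u v) $ r $ r"
    by (rule det_identity_except_row) (simp add: reflection_mat_def u axis_def transpose_def)
  finally show ?thesis by (simp add: reflection_mat_def u inner_axis' transpose_def)
next
  assume v: "v = axis r 1"
  have "det (reflection_mat u v) = reflection_mat u v $ r $ r"
    by (rule det_identity_except_row) (simp add: reflection_mat_def v axis_def)
  then show ?thesis by (simp add: reflection_mat_def v inner_axis)
qed

section \<open>Flags of bases and their stabilisers\<close>

lemma involution_span_invariant:
  assumes lin: "linear f" and invol: "\<And>x. f (f x) = x" and gen: "f ` W \<subseteq> span W"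
  shows "f ` span W = span W"
proof -
  have sub: "f ` span W \<subseteq> span W"
    unfolding span_linear_image[OF lin, symmetric] by (rule span_minimal[OF gen subspace_span])
  have "span W = f ` f ` span W" by (simp add: image_image invol)
  also have "\<dots> \<subseteq> f ` span W" using sub by blast
  finally show ?thesis using sub by blast
qed

lemma flag_of_complete:
  fixes w :: "nat \<Rightarrow> real^'n"
  assumes inj: "inj_on w {1..CARD('n)}" and spans: "span (w ` {1..CARD('n)}) = UNIV"
  shows "flag_of w \<in> complete_flags"
proof -
  have card_w: "card (w ` {1..m}) = m" if "m \<le> CARD('n)" for m
    using card_image[OF inj_on_subset[OF inj, of "{1..m}"]] that by auto
  have indep: "independent (w ` {1..CARD('n)})"
    by (rule card_le_dim_spanning[of _ UNIV]) (use spans card_w[of "CARD('n)"] in auto)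
  show ?thesis unfolding complete_flags_def flag_of_def
  proof (intro CollectI conjI allI)
    fix k
    have indep_k: "independent (w ` {1..min k CARD('n)})"
      by (rule independent_mono[OF indep]) auto
    show "dim (span (w ` {1..min k CARD('n)})) = min k CARD('n)"
      by (simp only: dim_span_eq_card_independent[OF indep_k] card_w[OF min.cobounded2])
    show "span (w ` {1..min k CARD('n)}) \<subseteq> span (w ` {1..min (Suc k) CARD('n)})"
      by (intro span_mono image_mono) auto
  qed simp
qed

lemma involution_fixes_flag:
  fixes g :: "real^'n^'n" and w :: "nat \<Rightarrow> real^'n"
  assumes invol: "g ** g = mat 1"
    and stable: "\<And>m t. m \<le> CARD('n) \<Longrightarrow> t \<in> {1..m} \<Longrightarrow> g *v w t \<in> span (w ` {1..m})"
  shows "flag_act g (flag_of w) = flag_of w"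
proof
  fix k
  have "(\<lambda>x. g *v x) ` span (w ` {1..min k CARD('n)}) = span (w ` {1..min k CARD('n)})"
    by (rule involution_span_invariant)
       (use invol stable in \<open>auto simp: matrix_vector_mul_assoc\<close>)
  then show "flag_act g (flag_of w) k = flag_of w k"
    by (simp add: flag_act_def flag_of_def)
qed

section \<open>Cyclic index arithmetic modulo N + 1\<close>

lemma cyclic_enum:
  fixes N j :: nat
  assumes "j \<le> N"
  shows "inj_on (\<lambda>t. (j + t - 1) mod (N + 1)) {1..N}"
    and "(\<lambda>t. (j + t - 1) mod (N + 1)) ` {1..N} = {..N} - {(j + N) mod (N + 1)}"
proof -
  let ?r = "\<lambda>t. (j + t - 1) mod (N + 1)"
  have inj: "inj_on ?r {1..N + 1}"
  proof
    fix x y assume xy: "x \<in> {1..N + 1}" "y \<in> {1..N + 1}" "?r x = ?r y"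
    then have "[j + (x - 1) = j + (y - 1)] (mod N + 1)" by (simp add: cong_def)
    then have "[x - 1 = y - 1] (mod N + 1)" by (simp only: cong_add_lcancel_nat)
    moreover have "x - 1 < N + 1" "y - 1 < N + 1" using xy by auto
    ultimately show "x = y" using xy unfolding cong_def by (simp only: mod_less) auto
  qed
  then show "inj_on ?r {1..N}" by (rule inj_on_subset) auto
  have "?r ` {1..N + 1} \<subseteq> {..N}" by auto
  moreover have "card (?r ` {1..N + 1}) = card {..N}" using card_image[OF inj] by simp
  ultimately have onto: "?r ` {1..N + 1} = {..N}" by (intro card_subset_eq) auto
  have "?r ` {1..N} = ?r ` ({1..N + 1} - {N + 1})"
    by (intro arg_cong[where f = "image ?r"]) auto
  also have "\<dots> = ?r ` {1..N + 1} - ?r ` {N + 1}"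
    by (rule inj_on_image_set_diff[OF inj]) auto
  finally show "?r ` {1..N} = {..N} - {(j + N) mod (N + 1)}"
    unfolding onto by simp
qed

lemma cyclic_enum_pred:
  fixes N j t :: nat
  assumes "2 \<le> t"
  shows "(j + (t - 1) - 1) mod (N + 1) = ((j + t - 1) mod (N + 1) + N) mod (N + 1)"
proof -
  have "j + t - 1 + N = (j + (t - 1) - 1) + (N + 1)" using assms by auto
  then show ?thesis by (metis mod_add_left_eq mod_add_self2)
qed

section \<open>The vectors e_0, ..., e_n and the special flags\<close>

locale standard_frame =
  fixes idx :: "nat \<Rightarrow> 'n::finite"
  assumes idx_bij: "bij_betw idx {1..CARD('n)} (UNIV :: 'n set)"
    and card_ge_2: "CARD('n) \<ge> 2"
begin

abbreviation e :: "nat \<Rightarrow> real^'n" where "e \<equiv> std_e idx"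

lemma idx_inj: "a \<in> {1..CARD('n)} \<Longrightarrow> b \<in> {1..CARD('n)} \<Longrightarrow> idx a = idx b \<longleftrightarrow> a = b"
  using idx_bij unfolding bij_betw_def inj_on_def by blast

lemma coord_e:
  assumes a: "a \<in> {1..CARD('n)}" and m: "m \<le> CARD('n)"
  shows "axis (idx a) 1 \<bullet> e m = (if m = 0 \<or> m = a then 1 else 0)"
proof (cases "m = 0")
  case True
  have "axis (idx a) 1 \<bullet> e m = (\<Sum>j\<in>{1..CARD('n)}. if idx a = idx j then 1 else 0)"
    using True by (simp add: std_e_def inner_sum_right inner_axis_axis if_distrib cong: if_cong)
  also have "\<dots> = (\<Sum>j\<in>{1..CARD('n)}. if a = j then 1 else 0)"
    by (rule sum.cong) (use idx_inj a in auto)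
  finally show ?thesis using True a by simp
next
  case False
  then show ?thesis using a m idx_inj[of a m] by (simp add: std_e_def inner_axis_axis)
qed

lemma e_integral: "e m $ a \<in> \<int>"
  by (auto simp: std_e_def axis_def intro!: Ints_sum)

text \<open>The n + 1 vectors are pairwise distinct, as some coordinate separates any two of
  them (this needs n \<ge> 2: for n = 1 the vectors e_0 and e_1 coincide).\<close>
lemma e_inj: "inj_on e {..CARD('n)}"
proof (rule inj_onI, rule ccontr)
  fix a b assume ab: "a \<in> {..CARD('n)}" "b \<in> {..CARD('n)}" "e a = e b" "a \<noteq> b"
  have "\<exists>c\<in>{1..CARD('n)}. (a = 0 \<or> a = c) \<noteq> (b = 0 \<or> b = c)"
  proof (cases "a = 0 \<or> b = 0")
    case True
    define x where "x = a + b"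
    have "x \<in> {1..CARD('n)}" "a = 0 \<and> b = x \<or> b = 0 \<and> a = x"
      using True ab by (auto simp: x_def)
    then show ?thesis
      using card_ge_2 by (intro bexI[of _ "if x = 1 then 2 else 1"]) auto
  next
    case False
    then show ?thesis using ab by (intro bexI[of _ a]) auto
  qed
  then obtain c where c: "c \<in> {1..CARD('n)}" "(a = 0 \<or> a = c) \<noteq> (b = 0 \<or> b = c)" ..
  have "(if a = 0 \<or> a = c then 1 else 0) = (if b = 0 \<or> b = c then (1::real) else 0)"
    using coord_e[OF c(1), of a] coord_e[OF c(1), of b] ab by simp
  then show False using c(2) by (simp split: if_splits)
qed

text \<open>Any n of the n + 1 vectors span R^n, since e_0 - (sum of the others) recovers
  the missing one.\<close>
lemma e_span_omit:
  assumes q: "q \<le> CARD('n)"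
  shows "span (e ` ({..CARD('n)} - {q})) = UNIV"
proof -
  let ?S = "e ` ({..CARD('n)} - {q})"
  have "e a \<in> span ?S" if a: "a \<in> {1..CARD('n)}" for a
  proof (cases "a = q")
    case True
    have "e 0 = (\<Sum>m\<in>{1..CARD('n)}. e m)" by (simp add: std_e_def)
    also have "\<dots> = e a + (\<Sum>m\<in>{1..CARD('n)} - {a}. e m)"
      using a by (simp add: sum.remove)
    finally have "e a = e 0 - (\<Sum>m\<in>{1..CARD('n)} - {a}. e m)" by simp
    also have "\<dots> \<in> span ?S"
      using True a by (intro span_diff span_sum span_base) auto
    finally show ?thesis .
  next
    case False
    then show ?thesis using a by (intro span_base) auto
  qed
  moreover have "Basis \<subseteq> e ` {1..CARD('n)}"
  proof
    fix v :: "real^'n" assume "v \<in> Basis"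
    then obtain k where k: "v = axis k (1::real)" by (auto simp: Basis_vec_def)
    obtain a where "a \<in> {1..CARD('n)}" "k = idx a"
      using idx_bij unfolding bij_betw_def by (metis UNIV_I imageE)
    then show "v \<in> e ` {1..CARD('n)}" using k by (auto simp: std_e_def)
  qed
  ultimately have "span Basis \<subseteq> span ?S" by (intro span_minimal) auto
  then show ?thesis by auto
qed

text \<open>Each F_j is the flag of n distinct vectors among e_0, ..., e_n, hence complete.\<close>
lemma special_flag_complete:
  assumes j: "j \<le> CARD('n)"
  shows "special_flag idx j \<in> complete_flags"
  unfolding special_flag_def
proof (rule flag_of_complete)
  have "inj_on e ((\<lambda>t. (j + t - 1) mod (CARD('n) + 1)) ` {1..CARD('n)})"
    by (rule inj_on_subset[OF e_inj]) auto
  then show "inj_on (\<lambda>t. e ((j + t - 1) mod (CARD('n) + 1))) {1..CARD('n)}"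
    using comp_inj_on[OF cyclic_enum(1)[OF j]] by (simp add: o_def)
  have "(\<lambda>t. e ((j + t - 1) mod (CARD('n) + 1))) ` {1..CARD('n)} = e ` ({..CARD('n)} - {(j + CARD('n)) mod (CARD('n) + 1)})"
    using cyclic_enum(2)[OF j] by (metis image_image)
  then show "span ((\<lambda>t. e ((j + t - 1) mod (CARD('n) + 1))) ` {1..CARD('n)}) = UNIV"
    using e_span_omit[of "(j + CARD('n)) mod (CARD('n) + 1)"] by simp
qed

text \<open>For the cyclic predecessor p of i there is an integral functional u with
  u(e_p) = 1 vanishing on all e_m with m \<notin> {p, i}; moreover u or e_p is a coordinate
  vector, which makes the associated reflection have determinant -1.\<close>
lemma separating_functional:
  assumes i: "i \<le> CARD('n)" and p: "p = (i + CARD('n)) mod (CARD('n) + 1)"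
  obtains u r where "u \<bullet> e p = 1"
    and "\<And>m. m \<le> CARD('n) \<Longrightarrow> m \<noteq> p \<Longrightarrow> m \<noteq> i \<Longrightarrow> u \<bullet> e m = 0"
    and "\<And>a. u$a \<in> \<int>" and "u = axis r 1 \<or> e p = axis r 1"
proof -
  have ends: "1 \<in> {1..CARD('n)}" "CARD('n) \<in> {1..CARD('n)}" using card_ge_2 by auto
  have axis_int: "axis k (1::real) $ a \<in> \<int>" for k a by (simp add: axis_def)
  consider "i = 0" | "i = 1" | "i \<ge> 2" by linarith
  then show ?thesis
  proof cases
    case 1
    then have "p = CARD('n)" by (simp add: p)
    then show ?thesis
      using that[of "axis (idx CARD('n)) 1" "idx CARD('n)"] ends 1
      by (auto simp: coord_e axis_int)
  next
    case 2
    then have "p = 0" by (simp add: p)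
    then show ?thesis
      using that[of "axis (idx 1) 1" "idx 1"] ends 2 by (auto simp: coord_e axis_int)
  next
    case 3
    have "i + CARD('n) = (i - 1) + (CARD('n) + 1)" using 3 by auto
    then have p_eq: "p = i - 1" using i 3 unfolding p by (simp only: mod_add_self2) simp
    have range: "i \<in> {1..CARD('n)}" "i - 1 \<in> {1..CARD('n)}" using 3 i by auto
    have e_p: "e p = axis (idx (i - 1)) 1" using p_eq 3 by (simp add: std_e_def)
    have "axis (idx i) 1 \<bullet> axis (idx (i - 1)) (1::real) = 0"
      using idx_inj[OF range] 3 by (simp add: inner_axis_axis)
    then show ?thesis
      using that[of "axis (idx (i - 1)) 1 - axis (idx i) 1" "idx (i - 1)"] range 3 p_eq e_p
      by (auto simp: coord_e axis_int inner_diff_left inner_axis_axis)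
  qed
qed

text \<open>The reflection x \<mapsto> x - 2 u(x) e_p fixes every special flag F_j with j \<noteq> i:
  it fixes e_m for m \<notin> {p, i} and changes e_p and e_i only by multiples of e_p, and
  in the cyclic enumeration of F_j the vector e_p comes right before e_i.\<close>
lemma special_flag_fixed:
  assumes j: "j \<le> CARD('n)" "j \<noteq> i"
    and p: "p = (i + CARD('n)) mod (CARD('n) + 1)"
    and u_p: "u \<bullet> e p = 1"
    and u_other: "\<And>m. m \<le> CARD('n) \<Longrightarrow> m \<noteq> p \<Longrightarrow> m \<noteq> i \<Longrightarrow> u \<bullet> e m = 0"
  shows "flag_act (reflection_mat u (e p)) (special_flag idx j) = special_flag idx j"
proof -
  define w where "w = (\<lambda>t. e ((j + t - 1) mod (CARD('n) + 1)))"
  have "flag_act (reflection_mat u (e p)) (flag_of w) = flag_of w"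
  proof (rule involution_fixes_flag[OF reflection_mat_involution[OF u_p]])
    fix m t :: nat assume "m \<le> CARD('n)" and t: "t \<in> {1..m}"
    define c where "c = (j + t - 1) mod (CARD('n) + 1)"
    have w_in: "w t' \<in> span (w ` {1..m})" if "t' \<in> {1..m}" for t'
      using that by (intro span_base) auto
    have e_p_in: "e p \<in> span (w ` {1..m})" if "c = p \<or> c = i"
    proof (cases "c = p")
      case True
      then show ?thesis using w_in[OF t] by (simp add: w_def c_def)
    next
      case False
      then have c_i: "c = i" using that by simp
      then have "t \<noteq> 1" using j by (auto simp: c_def)
      then have "2 \<le> t" "t - 1 \<in> {1..m}" using t by auto
      then have "w (t - 1) = e p"
        using cyclic_enum_pred[of t j "CARD('n)"] c_i p by (simp add: w_def c_def)
      then show ?thesis using w_in[of "t - 1"] \<open>t - 1 \<in> {1..m}\<close> by simp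
    qed
    show "reflection_mat u (e p) *v w t \<in> span (w ` {1..m})"
    proof (cases "c = p \<or> c = i")
      case True
      then show ?thesis
        unfolding reflection_mat_apply using w_in[OF t] e_p_in by (intro span_diff span_scale)
    next
      case False
      have "c \<le> CARD('n)" by (simp add: c_def less_Suc_eq_le)
      then have "u \<bullet> w t = 0" using u_other False by (simp add: w_def c_def)
      then show ?thesis using w_in[OF t] by (simp add: reflection_mat_apply)
    qed
  qed
  then show ?thesis by (simp add: special_flag_def w_def)
qed

text \<open>Each face of the coboundary vanishes: the reflection above lies in GL_n(Z), has
  determinant -1 and fixes all flags of the face, so equivariance forces b = -b.\<close>
lemma face_vanishes:
  assumes equivariant: "\<And>g Fs. g \<in> GL_Z \<Longrightarrow> length Fs = CARD('n) \<Longrightarrow>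
              set Fs \<subseteq> complete_flags \<Longrightarrow> b (map (flag_act g) Fs) = sgn (det g) * b Fs"
    and i: "i \<le> CARD('n)"
  shows "b (map (special_flag idx) ([0..<i] @ [Suc i..<CARD('n) + 1])) = 0"
proof -
  define p where "p = (i + CARD('n)) mod (CARD('n) + 1)"
  obtain u r where u_p: "u \<bullet> e p = 1"
    and u_other: "\<And>m. m \<le> CARD('n) \<Longrightarrow> m \<noteq> p \<Longrightarrow> m \<noteq> i \<Longrightarrow> u \<bullet> e m = 0"
    and u_int: "\<And>a. u$a \<in> \<int>" and coord: "u = axis r 1 \<or> e p = axis r 1"
    using separating_functional[OF i p_def] by blast
  define g where "g = reflection_mat u (e p)"
  have g_GL: "g \<in> GL_Z"
    unfolding g_def by (rule reflection_mat_GL_Z[OF u_p u_int e_integral])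
  have det_g: "det g = -1"
    using reflection_mat_det[OF coord] u_p by (simp add: g_def)
  define Fs where "Fs = map (special_flag idx) ([0..<i] @ [Suc i..<CARD('n) + 1])"
  have len: "length Fs = CARD('n)" using i by (simp add: Fs_def)
  have complete: "set Fs \<subseteq> complete_flags"
    using i by (auto simp: Fs_def intro!: special_flag_complete)
  have fixed: "map (flag_act g) Fs = Fs"
    using i by (auto simp: Fs_def g_def intro!: map_idI special_flag_fixed[OF _ _ p_def u_p u_other])
  have "b Fs = - b Fs"
    using equivariant[OF g_GL len complete] fixed det_g by simp
  then show ?thesis by (simp add: Fs_def)
qed

end

theorem lemma5p1:
  fixes idx :: "nat \<Rightarrow> 'n::finite"
    and b :: "(nat \<Rightarrow> (real^'n) set) list \<Rightarrow> real"
  assumes "even CARD('n)"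
    and "bij_betw idx {1..CARD('n)} (UNIV :: 'n set)"
    and "\<And>g Fs. g \<in> GL_Z \<Longrightarrow> length Fs = CARD('n) \<Longrightarrow> set Fs \<subseteq> complete_flags \<Longrightarrow>
           b (map (flag_act g) Fs) = sgn (det g) * b Fs"
  shows "coboundary b (map (special_flag idx) [0..<CARD('n) + 1]) = 0"
proof -
  have "CARD('n) \<noteq> 0" by simp
  moreover have "CARD('n) \<noteq> 1" using assms(1) by auto
  ultimately have "CARD('n) \<ge> 2" by linarith
  then interpret standard_frame idx using assms(2) by unfold_locales
  let ?L = "map (special_flag idx) [0..<CARD('n) + 1]"
  have face: "take i ?L @ drop (Suc i) ?L = map (special_flag idx) ([0..<i] @ [Suc i..<CARD('n) + 1])"
    if "i < CARD('n) + 1" for i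
    using that by (simp add: take_map drop_map)
  show ?thesis
    unfolding coboundary_def using face face_vanishes[OF assms(3)] by (intro sum.neutral) simp
qed

end
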